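(* Let $q=2^m$ with $m\ge 2$, and let $k$ be an integer with $1\le k\le q+1$ such that $\mathrm{Tr}_{q^2/q}(\mathcal C_{\{3,5\}})$ contains a codeword of weight $k$. Then $\mathcal B_k(\mathrm{Tr}_{q^2/q}(\mathcal C_{\{3,5\}}))$ is invariant under the action of $\mathrm{Stab}_{U_{q+1}}$, i.e. $\pi(B)\in \mathcal B_k(\mathrm{Tr}_{q^2/q}(\mathcal C_{\{3,5\}}))$ for every block $B$ in it and every $\pi\in\mathrm{Stab}_{U_{q+1}}$. In particular, if $k>3$, the incidence structure $(U_{q+1},\mathcal B_k(\mathrm{Tr}_{q^2/q}(\mathcal C_{\{3,5\}})))$ is a $3$-design.
   Context: $U_{q+1}$ is the set of $(q+1)$-th roots of unity in $\mathrm{GF}(q^2)$, viewed as a subset of the projective line $\mathrm{PG}(1,q^2)=\mathrm{GF}(q^2)\cup\{\infty\}$; coordinates are indexed by $U_{q+1}$. $\mathrm{Stab}_{U_{q+1}}$ is the setwise stabilizer of $U_{q+1}$ in $\mathrm{PGL}_2(\mathrm{GF}(q^2))$ acting on $\mathrm{PG}(1,q^2)$ by linear fractional transformations $x\mapsto\frac{ax+b}{cx+d}$. $\mathcal C_{\{3,5\}}=\{(a_3u^3+a_{q-2}u^{q-2}+a_5u^5+a_{q-4}u^{q-4})_{u\in U_{q+1}}: a_i\in\mathrm{GF}(q^2)\}$; $\mathrm{Tr}_{q^2/q}(\mathcal C)$ is obtained by applying $\mathrm{Tr}_{q^2/q}(x)=x+x^q$ coordinatewise to all codewords. For a code $\mathcal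 C$, $\mathcal B_k(\mathcal C)$ is the set of supports $\{u: c_u\neq0\}$ of the codewords of Hamming weight $k$. A $3$-design is a pair (point set, set of $k$-subsets called blocks) such that every $3$ points lie in the same positive number $\lambda$ of blocks. *)

theory Defs
  imports Main
begin

text \<open>GF(q^2) is modelled by a finite field type 'a with CARD('a) = q^2.
 PG(1,q^2) is modelled as 'a option, with None playing the role of infinity.\<close>

definition Uroots :: "nat \<Rightarrow> 'a::field set" where
  "Uroots q = {u. u ^ (q + 1) = 1}"

definition trq :: "nat \<Rightarrow> 'a::field \<Rightarrow> 'a" where
  "trq q x = x + x ^ q"

text \<open>Codewords are functions on the coordinate set U_{q+1} (extended by 0 outside).\<close>
definition code35 :: "nat \<Rightarrow> ('a::field \<Rightarrow> 'a) set" where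
  "code35 q = {(\<lambda>u. if u \<in> Uroots q then
       a3 * u ^ 3 + a4 * u ^ (q - 2) + a5 * u ^ 5 + a6 * u ^ (q - 4) else 0)
     | a3 a4 a5 a6. True}"

definition trace_code :: "nat \<Rightarrow> ('a::field \<Rightarrow> 'a) set \<Rightarrow> ('a \<Rightarrow> 'a) set" where
  "trace_code q C = (\<lambda>c. (\<lambda>u. trq q (c u))) ` C"

definition supp_on :: "'a set \<Rightarrow> ('a \<Rightarrow> 'b::zero) \<Rightarrow> 'a set" where
  "supp_on U c = {u \<in> U. c u \<noteq> 0}"

definition blocks_k :: "'a set \<Rightarrow> nat \<Rightarrow> ('a \<Rightarrow> 'b::zero) set \<Rightarrow> 'a set set" where
  "blocks_k U k C = {supp_on U c | c. c \<in> C \<and> card (supp_on U c) = k}"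

fun mob :: "'a::field \<times> 'a \<times> 'a \<times> 'a \<Rightarrow> 'a option \<Rightarrow> 'a option" where
  "mob (a, b, c, d) (Some x) = (if c * x + d = 0 then None else Some ((a * x + b) / (c * x + d)))"
| "mob (a, b, c, d) None = (if c = 0 then None else Some (a / c))"

definition stab :: "'a::field set \<Rightarrow> ('a \<times> 'a \<times> 'a \<times> 'a) set" where
  "stab U = {(a, b, c, d). a * d - b * c \<noteq> 0 \<and> mob (a, b, c, d) ` (Some ` U) = Some ` U}"

definition is_t_design :: "nat \<Rightarrow> 'a set \<Rightarrow> 'a set set \<Rightarrow> bool" where
  "is_t_design t P Bs \<longleftrightarrow> (\<forall>B\<in>Bs. B \<subseteq> P) \<and>
     (\<exists>lam::nat. lam > 0 \<and> (\<forall>T. T \<subseteq> P \<and> card T = t \<longrightarrow> card {B \<in> Bs. T \<subseteq> B} = lam))"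

end

theory Submission
  imports Defs
    "HOL-Computational_Algebra.Polynomial"
    "HOL-Computational_Algebra.Primes"
begin

text \<open>Write \<open>cj x = x ^ q\<close> for the involution of GF(q^2) over GF(q); then
  \<open>U = {u. u * cj u = 1}\<close> and \<open>cj u = 1 / u\<close> on \<open>U\<close>. On \<open>U\<close> every codeword of the trace code is
  \<open>u \<mapsto> Tr (B u^3 + D u^5)\<close>, and \<open>u^5 Tr (B u^3 + D u^5) = D u^10 + B u^8 + cj B u^2 + cj D\<close>.
  Every element of the stabiliser of \<open>U\<close> has the form \<open>(a, b, \<kappa> cj b, \<kappa> cj a)\<close> with
  \<open>\<kappa> cj \<kappa> = 1\<close>. In characteristic 2 the powers \<open>(a u + b)^8\<close> and \<open>(a u + b)^2\<close> have only two
  terms, so substituting \<open>(a u + b) / (c u + d)\<close> and clearing denominators gives again a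
  polynomial in \<open>u^10, u^8, u^2, 1\<close>, whose coefficients are conjugate-reciprocal up to the
  factor \<open>\<kappa>^10\<close>; by Hilbert 90 a scalar multiple of it has the shape \<open>D' u^10 + B' u^8 +
  cj B' u^2 + cj D'\<close> again. Hence the stabiliser permutes the supports of codewords of a given
  weight. It is moreover 3-transitive on \<open>U\<close>, because cross-ratios of points of \<open>U\<close> lie in
  GF(q), so the number of blocks through three points does not depend on the points.\<close>

lemma of_nat_card_UNIV_eq_0: "(of_nat (card (UNIV :: 'a::{field,finite} set)) :: 'a) = 0"
proof -
  have "(\<Sum>x\<in>UNIV. x) = (\<Sum>x\<in>UNIV. (x::'a) + 1)"
    by (rule sum.reindex_bij_witness[of _ "\<lambda>x. x + 1" "\<lambda>x. x - 1"]) auto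
  then show ?thesis
    by (simp add: sum.distrib)
qed

lemma power_card_UNIV_eq_self:
  fixes x :: "'a::{field,finite}"
  shows "x ^ card (UNIV :: 'a set) = x"
proof (cases "x = 0")
  case True
  then show ?thesis by (simp add: finite_UNIV_card_ge_0)
next
  case False
  let ?S = "UNIV - {0::'a}"
  have "(\<Prod>y\<in>?S. y) = (\<Prod>y\<in>?S. x * y)"
    by (rule prod.reindex_bij_witness[of _ "\<lambda>y. x * y" "\<lambda>y. y / x"]) (use False in auto)
  also have "\<dots> = x ^ card ?S * (\<Prod>y\<in>?S. y)"
    by (simp add: prod.distrib)
  finally have "(\<Prod>y\<in>?S. y) = x ^ card ?S * (\<Prod>y\<in>?S. y)" .
  moreover have "(\<Prod>y\<in>?S. y) \<noteq> 0"
    by simp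
  ultimately have "x ^ Suc (card ?S) = x"
    by (metis mult_cancel_right1 power_Suc mult_1_right)
  moreover have "card (UNIV :: 'a set) = Suc (card ?S)"
    using finite_UNIV_card_ge_0[where 'a = 'a] by (simp add: card_Diff_singleton)
  ultimately show ?thesis
    by (simp only:)
qed

lemma quadratic_eq_0_at_3_points:
  fixes P R S :: "'a::field"
  assumes "x \<noteq> y" "x \<noteq> z" "y \<noteq> z"
    and "P * x ^ 2 + R * x + S = 0" "P * y ^ 2 + R * y + S = 0" "P * z ^ 2 + R * z + S = 0"
  shows "P = 0 \<and> R = 0 \<and> S = 0"
proof -
  have "(x - y) * (P * (x + y) + R) = 0" using assms(4,5) by algebra
  then have xy: "P * (x + y) + R = 0" using assms(1) by simp
  have "(x - z) * (P * (x + z) + R) = 0" using assms(4,6) by algebra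
  then have xz: "P * (x + z) + R = 0" using assms(2) by simp
  have "P * (y - z) = 0" using xy xz by algebra
  then have "P = 0" using assms(3) by simp
  then show ?thesis using xy assms(4) by simp
qed


section \<open>Linear fractional maps\<close>

fun moebius :: "'a::field \<times> 'a \<times> 'a \<times> 'a \<Rightarrow> 'a \<Rightarrow> 'a" where
  "moebius (a, b, c, d) u = (a * u + b) / (c * u + d)"

fun moebius_den :: "'a::field \<times> 'a \<times> 'a \<times> 'a \<Rightarrow> 'a \<Rightarrow> 'a" where
  "moebius_den (a, b, c, d) u = c * u + d"

fun det2 :: "'a::comm_ring \<times> 'a \<times> 'a \<times> 'a \<Rightarrow> 'a" where
  "det2 (a, b, c, d) = a * d - b * c"

fun mat2_mult :: "'a::comm_ring \<times> 'a \<times> 'a \<times> 'a \<Rightarrow> 'a \<times> 'a \<times> 'a \<times> 'a \<Rightarrow> 'a \<times> 'a \<times> 'a \<times> 'a" where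
  "mat2_mult (A, B, C, D) (a, b, c, d) =
     (A * a + B * c, A * b + B * d, C * a + D * c, C * b + D * d)"

fun mat2_adj :: "'a::comm_ring \<times> 'a \<times> 'a \<times> 'a \<Rightarrow> 'a \<times> 'a \<times> 'a \<times> 'a" where
  "mat2_adj (a, b, c, d) = (d, - b, - c, a)"

lemma det2_mat2_mult: "det2 (mat2_mult N M) = det2 N * det2 M"
  by (cases N; cases M) (simp add: algebra_simps)

lemma det2_mat2_adj [simp]: "det2 (mat2_adj M) = det2 M"
  by (cases M) (simp add: algebra_simps)

lemma mat2_adj_adj [simp]: "mat2_adj (mat2_adj M) = M"
  by (cases M) simp

lemma mob_Some_moebius: "moebius_den M u \<noteq> 0 \<Longrightarrow> mob M (Some u) = Some (moebius M u)"
  by (cases M) simp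

lemma moebius_inj:
  assumes "det2 M \<noteq> 0" "moebius_den M u \<noteq> 0" "moebius_den M v \<noteq> 0"
    and "moebius M u = moebius M v"
  shows "u = v"
proof (cases M)
  case (fields a b c d)
  have "(a * u + b) * (c * v + d) = (a * v + b) * (c * u + d)"
    using assms(2-4) by (simp add: fields field_simps)
  then have "(a * d - b * c) * (u - v) = 0" by algebra
  then show ?thesis using assms(1) by (simp add: fields)
qed

lemma moebius_mat2_mult:
  assumes "moebius_den M u \<noteq> 0" "moebius_den N (moebius M u) \<noteq> 0"
  shows "moebius_den (mat2_mult N M) u \<noteq> 0"
    and "moebius (mat2_mult N M) u = moebius N (moebius M u)"
proof -
  obtain a b c d where M: "M = (a, b, c, d)" by (cases M)
  obtain A B C D where N: "N = (A, B, C, D)" by (cases N)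
  have den: "moebius_den (mat2_mult N M) u = moebius_den N (moebius M u) * (c * u + d)"
    and num: "(A * a + B * c) * u + (A * b + B * d) = (A * moebius M u + B) * (c * u + d)"
    using assms(1) by (simp_all add: M N field_simps)
  show "moebius_den (mat2_mult N M) u \<noteq> 0"
    unfolding den using assms by (simp add: M)
  show "moebius (mat2_mult N M) u = moebius N (moebius M u)"
    using den num assms by (simp add: M N)
qed

lemma moebius_mat2_mult_pole:
  assumes "moebius_den M u = 0" "det2 M \<noteq> 0" and N: "N = (A, B, C, D)" "C \<noteq> 0"
  shows "moebius_den (mat2_mult N M) u \<noteq> 0" and "moebius (mat2_mult N M) u = A / C"
proof -
  obtain a b c d where M: "M = (a, b, c, d)" by (cases M)
  have d: "d = - (c * u)" using assms(1) by (simp add: M add_eq_0_iff)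
  have "a * u + b \<noteq> 0"
  proof
    assume "a * u + b = 0"
    then have "b = - (a * u)" by (simp add: add_eq_0_iff)
    then show False using assms(2) by (simp add: M d)
  qed
  moreover have "moebius_den (mat2_mult N M) u = C * (a * u + b)"
    and "(A * a + B * c) * u + (A * b + B * d) = A * (a * u + b)"
    by (simp_all add: M N d algebra_simps)
  ultimately show "moebius_den (mat2_mult N M) u \<noteq> 0" and "moebius (mat2_mult N M) u = A / C"
    using N(2) by (simp_all add: M N)
qed

lemma moebius_mat2_adj:
  assumes "det2 M \<noteq> 0" "moebius_den M u \<noteq> 0"
  shows "moebius_den (mat2_adj M) (moebius M u) \<noteq> 0"
    and "moebius (mat2_adj M) (moebius M u) = u"
proof -
  obtain a b c d where M: "M = (a, b, c, d)" by (cases M)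
  have Y: "c * u + d \<noteq> 0" using assms(2) by (simp add: M)
  have den: "moebius_den (mat2_adj M) (moebius M u) = (a * d - b * c) / (c * u + d)"
    and num: "d * moebius M u - b = u * ((a * d - b * c) / (c * u + d))"
    using Y by (simp_all add: M field_simps)
  show "moebius_den (mat2_adj M) (moebius M u) \<noteq> 0"
    using den assms(1) Y by (simp add: M)
  show "moebius (mat2_adj M) (moebius M u) = u"
    using den num assms(1) Y by (simp add: M)
qed

definition cross_ratio_mat :: "'a::field \<Rightarrow> 'a \<Rightarrow> 'a \<Rightarrow> 'a \<times> 'a \<times> 'a \<times> 'a" where
  "cross_ratio_mat u1 u2 u3 = (u2 - u3, - u1 * (u2 - u3), u2 - u1, - u3 * (u2 - u1))"

lemma det2_cross_ratio_mat:
  "det2 (cross_ratio_mat u1 u2 u3) = (u2 - u3) * (u2 - u1) * (u1 - u3)"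
  by (simp add: cross_ratio_mat_def algebra_simps)

lemma moebius_den_cross_ratio_mat:
  "moebius_den (cross_ratio_mat u1 u2 u3) u = (u2 - u1) * (u - u3)"
  by (simp add: cross_ratio_mat_def algebra_simps)

lemma moebius_cross_ratio_mat:
  "moebius (cross_ratio_mat u1 u2 u3) u = (u2 - u3) * (u - u1) / ((u2 - u1) * (u - u3))"
  by (simp add: cross_ratio_mat_def algebra_simps)


lemma mem_stab_iff: "M \<in> stab U \<longleftrightarrow> det2 M \<noteq> 0 \<and> mob M ` Some ` U = Some ` U"
  by (cases M) (simp add: stab_def)

lemma stab_det2: "M \<in> stab U \<Longrightarrow> det2 M \<noteq> 0"
  by (simp add: mem_stab_iff)

lemma stab_moebius_den:
  assumes "M \<in> stab U" "u \<in> U"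
  shows "moebius_den M u \<noteq> 0"
proof
  assume "moebius_den M u = 0"
  then have "mob M (Some u) = None" by (cases M) simp
  moreover have "mob M (Some u) \<in> Some ` U" using assms by (auto simp: mem_stab_iff)
  ultimately show False by auto
qed

lemma stab_mob_Some: "M \<in> stab U \<Longrightarrow> u \<in> U \<Longrightarrow> mob M (Some u) = Some (moebius M u)"
  by (rule mob_Some_moebius[OF stab_moebius_den])

lemma stab_moebius_mem:
  assumes "M \<in> stab U" "u \<in> U"
  shows "moebius M u \<in> U"
proof -
  have "Some (moebius M u) = mob M (Some u)" using stab_mob_Some[OF assms] by simp
  also have "\<dots> \<in> Some ` U" using assms by (auto simp: mem_stab_iff)
  finally show ?thesis by auto
qed

lemma stab_moebius_surj:
  assumes "M \<in> stab U" "v \<in> U"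
  obtains u where "u \<in> U" "v = moebius M u"
proof -
  have "Some v \<in> mob M ` Some ` U" using assms by (simp add: mem_stab_iff)
  then show ?thesis using that stab_mob_Some[OF assms(1)] by force
qed

lemma stab_moebius_inj_on: "M \<in> stab U \<Longrightarrow> inj_on (moebius M) U"
  by (rule inj_onI) (use moebius_inj stab_det2 stab_moebius_den in blast)

lemma stab_moebius_adj: "M \<in> stab U \<Longrightarrow> u \<in> U \<Longrightarrow> moebius (mat2_adj M) (moebius M u) = u"
  using moebius_mat2_adj(2)[OF stab_det2 stab_moebius_den] by blast

lemma stabI:
  assumes "finite U" "det2 M \<noteq> 0"
    and "\<And>u. u \<in> U \<Longrightarrow> moebius_den M u \<noteq> 0 \<and> moebius M u \<in> U"
  shows "M \<in> stab U"
proof -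
  have "inj_on (moebius M) U"
    by (rule inj_onI) (use assms(2,3) moebius_inj in blast)
  moreover have "moebius M ` U \<subseteq> U"
    using assms(3) by blast
  ultimately have "moebius M ` U = U"
    using endo_inj_surj[OF assms(1)] by blast
  moreover have "mob M ` Some ` U = Some ` moebius M ` U"
    unfolding image_image by (rule image_cong[OF refl]) (simp add: mob_Some_moebius assms(3))
  ultimately show ?thesis
    using assms(2) by (simp add: mem_stab_iff)
qed

lemma stab_adj:
  assumes "finite U" "M \<in> stab U"
  shows "mat2_adj M \<in> stab U"
proof (rule stabI[OF assms(1)])
  show "det2 (mat2_adj M) \<noteq> 0" using stab_det2[OF assms(2)] by simp
  fix v assume "v \<in> U"
  then obtain u where u: "u \<in> U" "v = moebius M u"
    using stab_moebius_surj[OF assms(2)] by blast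
  then show "moebius_den (mat2_adj M) v \<noteq> 0 \<and> moebius (mat2_adj M) v \<in> U"
    using moebius_mat2_adj[OF stab_det2[OF assms(2)] stab_moebius_den[OF assms(2) u(1)]] by simp
qed


section \<open>Designs from transitive symmetries\<close>

lemma card_blocks_containing_le:
  assumes "finite P" "\<forall>B\<in>Bs. B \<subseteq> P" "inj_on g P" "g ` T1 = T2" "\<forall>B\<in>Bs. g ` B \<in> Bs"
  shows "card {B \<in> Bs. T1 \<subseteq> B} \<le> card {B \<in> Bs. T2 \<subseteq> B}"
proof (rule card_inj_on_le)
  show "inj_on ((`) g) {B \<in> Bs. T1 \<subseteq> B}"
    using assms(2,3) by (auto intro!: inj_onI simp: inj_on_image_eq_iff)
  show "(`) g ` {B \<in> Bs. T1 \<subseteq> B} \<subseteq> {B \<in> Bs. T2 \<subseteq> B}"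
    using assms(4,5) by auto
  show "finite {B \<in> Bs. T2 \<subseteq> B}"
    by (rule finite_subset[of _ "Pow P"]) (use assms(1,2) in auto)
qed

lemma is_t_designI_transitive:
  assumes fin: "finite P" and sub: "\<forall>B\<in>Bs. B \<subseteq> P" and B0: "B0 \<in> Bs" "t \<le> card B0"
    and trans: "\<And>T1 T2. T1 \<subseteq> P \<Longrightarrow> card T1 = t \<Longrightarrow> T2 \<subseteq> P \<Longrightarrow> card T2 = t \<Longrightarrow>
      \<exists>g. inj_on g P \<and> g ` T1 = T2 \<and> (\<forall>B\<in>Bs. g ` B \<in> Bs)"
  shows "is_t_design t P Bs"
proof -
  obtain T0 where T0: "T0 \<subseteq> B0" "card T0 = t"
    using obtain_subset_with_card_n[OF B0(2)] by blast
  have T0P: "T0 \<subseteq> P" using T0(1) sub B0(1) by blast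
  have same: "card {B \<in> Bs. T \<subseteq> B} = card {B \<in> Bs. T0 \<subseteq> B}"
    if T: "T \<subseteq> P" "card T = t" for T
  proof -
    obtain g where g: "inj_on g P" "g ` T = T0" "\<forall>B\<in>Bs. g ` B \<in> Bs"
      using trans[OF T T0P T0(2)] by blast
    obtain h where h: "inj_on h P" "h ` T0 = T" "\<forall>B\<in>Bs. h ` B \<in> Bs"
      using trans[OF T0P T0(2) T] by blast
    show ?thesis
      using card_blocks_containing_le[OF fin sub g] card_blocks_containing_le[OF fin sub h]
      by (rule le_antisym)
  qed
  have "finite {B \<in> Bs. T0 \<subseteq> B}"
    by (rule finite_subset[of _ "Pow P"]) (use fin sub in auto)
  moreover have "B0 \<in> {B \<in> Bs. T0 \<subseteq> B}"
    using B0(1) T0(1) by simp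
  ultimately have "card {B \<in> Bs. T0 \<subseteq> B} > 0"
    by (subst card_gt_0_iff) blast
  then show ?thesis
    unfolding is_t_design_def using sub same by blast
qed


section \<open>The unit circle of GF(q^2) in characteristic 2\<close>

locale gf_q2 =
  fixes q m :: nat and U :: "'a::{field,finite} set"
  assumes m_ge_2: "2 \<le> m" and q_eq: "q = 2 ^ m"
    and card_UNIV_eq: "card (UNIV :: 'a set) = q ^ 2"
    and U_eq: "U = Uroots q"
begin

lemma q_ge_4: "4 \<le> q"
  using power_increasing[OF m_ge_2, of "2::nat"] by (simp add: q_eq)

lemma CHAR_eq_2: "CHAR('a) = 2"
proof -
  have prime: "prime CHAR('a)"
    by (rule prime_CHAR_semidom) (simp add: finite_imp_CHAR_pos)
  have "CHAR('a) dvd card (UNIV :: 'a set)"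
    using of_nat_card_UNIV_eq_0 of_nat_eq_0_iff_char_dvd by blast
  also have "card (UNIV :: 'a set) = 2 ^ (m * 2)"
    by (simp add: card_UNIV_eq q_eq flip: power_mult)
  finally have "CHAR('a) dvd 2"
    by (rule prime_dvd_power[OF prime])
  then show ?thesis
    by (rule primes_dvd_imp_eq[OF prime two_is_prime_nat])
qed

lemma uminus_eq_self: "- (x::'a) = x"
  by (rule uminus_CHAR_2[OF CHAR_eq_2])

lemma diff_eq_add: "(x::'a) - y = x + y"
  by (rule minus_CHAR_2[OF CHAR_eq_2])

lemma add_power_2_power: "((x::'a) + y) ^ (2 ^ j) = x ^ (2 ^ j) + y ^ (2 ^ j)"
  by (rule freshmans_dream'[where n = j]) (simp_all add: CHAR_eq_2)

definition cj :: "'a \<Rightarrow> 'a" where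
  "cj x = x ^ q"

lemma cj_add [simp]: "cj (x + y) = cj x + cj y"
  unfolding cj_def using add_power_2_power[of x y m] by (simp add: q_eq)

lemma cj_mult [simp]: "cj (x * y) = cj x * cj y"
  unfolding cj_def by (simp add: power_mult_distrib)

lemma cj_inverse [simp]: "cj (inverse x) = inverse (cj x)"
  unfolding cj_def by (simp add: power_inverse)

lemma cj_divide [simp]: "cj (x / y) = cj x / cj y"
  unfolding cj_def by (simp add: power_divide)

lemma cj_power [simp]: "cj (x ^ n) = cj x ^ n"
  unfolding cj_def by (simp add: power_mult[symmetric] mult.commute)

lemma cj_0 [simp]: "cj 0 = 0" and cj_1 [simp]: "cj 1 = 1"
  unfolding cj_def using q_ge_4 by auto

lemma cj_minus [simp]: "cj (- x) = - cj x"
  by (simp add: uminus_eq_self)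

lemma cj_diff [simp]: "cj (x - y) = cj x - cj y"
  by (simp add: diff_eq_add)

lemma cj_cj [simp]: "cj (cj x) = x"
  unfolding cj_def using power_card_UNIV_eq_self[of x]
  by (simp add: power_mult[symmetric] card_UNIV_eq power2_eq_square)

lemma cj_eq_0_iff [simp]: "cj x = 0 \<longleftrightarrow> x = 0"
  by (metis cj_0 cj_cj)

lemma trq_eq: "trq q x = x + cj x"
  by (simp add: trq_def cj_def)

lemma mem_U_iff: "u \<in> U \<longleftrightarrow> u * cj u = 1"
  by (simp add: U_eq Uroots_def cj_def)

lemma U_nonzero: "u \<in> U \<Longrightarrow> u \<noteq> 0"
  by (auto simp: mem_U_iff)

lemma cj_U: "u \<in> U \<Longrightarrow> cj u = inverse u"
  by (simp add: mem_U_iff inverse_unique)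

lemma U_power_eq_inverse: "u \<in> U \<Longrightarrow> j \<le> q + 1 \<Longrightarrow> u ^ (q + 1 - j) = inverse (u ^ j)"
  by (rule inverse_unique[symmetric])
    (simp add: U_eq Uroots_def flip: power_add)

lemma card_U_ge: "q + 1 \<le> card U"
proof -
  have fibre: "card {x::'a. x ^ (q - 1) = y} \<le> q - 1" for y
  proof -
    define p where "p = monom (1::'a) (q - 1) - [:y:]"
    have "coeff p (q - 1) = 1"
      using q_ge_4 by (simp add: p_def coeff_monom coeff_pCons split: nat.split)
    then have "p \<noteq> 0" by auto
    moreover have "degree p \<le> q - 1"
      unfolding p_def by (rule degree_diff_le) (auto simp: degree_monom_le)
    moreover have "{x. x ^ (q - 1) = y} = {x. poly p x = 0}"
      by (simp add: p_def poly_monom)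
    ultimately show ?thesis
      using card_poly_roots_bound[of p] by simp
  qed
  have qq: "(q - 1) * (q + 1) = q ^ 2 - 1"
    using q_ge_4 by (cases q) (simp_all add: power2_eq_square algebra_simps)
  have card_Suc: "Suc (q ^ 2 - 1) = card (UNIV :: 'a set)"
    using q_ge_4 by (simp add: card_UNIV_eq)
  have into_U: "x ^ (q - 1) \<in> U" if "x \<noteq> 0" for x :: 'a
  proof -
    have "x * x ^ (q ^ 2 - 1) = x"
      using power_card_UNIV_eq_self[of x] by (simp flip: card_Suc)
    then have "x ^ (q ^ 2 - 1) = 1"
      using that by simp
    moreover have "(x ^ (q - 1)) ^ (q + 1) = x ^ (q ^ 2 - 1)"
      by (simp only: power_mult flip: qq)
    ultimately show ?thesis by (simp add: U_eq Uroots_def)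
  qed
  have "(q - 1) * (q + 1) = card (UNIV - {0::'a})"
    by (simp only: qq) (simp add: card_Diff_singleton card_UNIV_eq)
  also have "\<dots> \<le> card (\<Union>y\<in>U. {x::'a. x ^ (q - 1) = y})"
  proof (rule card_mono)
    show "UNIV - {0} \<subseteq> (\<Union>y\<in>U. {x::'a. x ^ (q - 1) = y})"
      using into_U by blast
  qed simp
  also have "\<dots> \<le> (\<Sum>y\<in>U. card {x::'a. x ^ (q - 1) = y})"
    by (rule card_UN_le) simp
  also have "\<dots> \<le> (\<Sum>y\<in>U. q - 1)"
    by (rule sum_mono) (rule fibre)
  also have "\<dots> = card U * (q - 1)"
    by simp
  finally have "(q + 1) * (q - 1) \<le> card U * (q - 1)"
    by (metis mult.commute)
  then show ?thesis
    using q_ge_4 by (subst (asm) mult_le_cancel2) simp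
qed

lemma three_points_U:
  obtains u1 u2 u3 where "u1 \<in> U" "u2 \<in> U" "u3 \<in> U" "u1 \<noteq> u2" "u1 \<noteq> u3" "u2 \<noteq> u3"
proof -
  obtain S where "S \<subseteq> U" "card S = 3"
    using card_U_ge q_ge_4 obtain_subset_with_card_n[of 3 U] by auto
  then show ?thesis using that by (auto simp: card_3_iff)
qed

lemma hilbert90:
  assumes "e * cj e = 1"
  obtains r where "r \<noteq> 0" "cj r = r * e"
proof (cases "e = 1")
  case True
  then show ?thesis using that[of 1] by simp
next
  case False
  have "1 + cj e \<noteq> 0"
  proof
    assume "1 + cj e = 0"
    then have "cj e = 1" by (simp add: add_eq_0_iff uminus_eq_self)
    then have "e = 1" by (metis cj_cj cj_1)
    then show False using False by blast
  qed
  moreover have "cj (1 + cj e) = (1 + cj e) * e"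
    using assms by (simp add: algebra_simps)
  ultimately show ?thesis using that by blast
qed


subsection \<open>Normal form of the stabiliser\<close>

lemma stab_quadratic_vanishes:
  assumes M: "(a, b, c, d) \<in> stab U" and u: "u \<in> U"
  shows "(a * cj b - c * cj d) * u ^ 2 + (a * cj a + b * cj b - c * cj c - d * cj d) * u
           + (b * cj a - d * cj c) = 0"
proof -
  let ?X = "a * u + b" and ?Y = "c * u + d"
  have Y: "?Y \<noteq> 0" using stab_moebius_den[OF M u] by simp
  have "?X / ?Y * cj (?X / ?Y) = 1"
    using stab_moebius_mem[OF M u] by (simp only: mem_U_iff moebius.simps)
  then have "?X * cj ?X = ?Y * cj ?Y"
    using Y by (simp add: field_simps del: cj_add cj_mult)
  moreover have "cj (x * u + y) * u = cj x + cj y * u" for x y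
    using u U_nonzero[OF u] by (simp add: cj_U field_simps)
  ultimately have "?X * (cj a + cj b * u) = ?Y * (cj c + cj d * u)"
    by (metis mult.assoc)
  then show ?thesis by algebra
qed

lemma stab_conj_form:
  assumes M: "(a, b, c, d) \<in> stab U"
  obtains \<kappa> where "\<kappa> * cj \<kappa> = 1" "c = \<kappa> * cj b" "d = \<kappa> * cj a"
proof -
  obtain u1 u2 u3 where u: "u1 \<in> U" "u2 \<in> U" "u3 \<in> U" "u1 \<noteq> u2" "u1 \<noteq> u3" "u2 \<noteq> u3"
    by (rule three_points_U)
  have "a * cj b - c * cj d = 0 \<and> a * cj a + b * cj b - c * cj c - d * cj d = 0
      \<and> b * cj a - d * cj c = 0"
    by (rule quadratic_eq_0_at_3_points[OF u(4-6)])
      (use stab_quadratic_vanishes[OF M] u(1-3) in blast)+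
  then have P: "c * cj d = a * cj b" and R: "d * cj d - b * cj b = a * cj a - c * cj c"
    and S: "d * cj c = b * cj a"
    by (simp_all add: algebra_simps)
  have det: "a * d - b * c \<noteq> 0" using stab_det2[OF M] by simp
  define \<Delta> where "\<Delta> = cj a * cj d - cj b * cj c"
  have "\<Delta> = cj (a * d - b * c)" by (simp add: \<Delta>_def)
  then have \<Delta>: "\<Delta> \<noteq> 0" using det by (simp del: cj_mult cj_diff)
  define \<kappa> where "\<kappa> = (a * cj a - c * cj c) / \<Delta>"
  have d: "d = \<kappa> * cj a"
  proof -
    have "d * \<Delta> = cj a * (d * cj d - b * cj b)" using S by (simp add: \<Delta>_def algebra_simps)
    then show ?thesis using R \<Delta> by (simp add: \<kappa>_def field_simps)
  qed
  have c: "c = \<kappa> * cj b"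
  proof -
    have "c * \<Delta> = cj b * (a * cj a - c * cj c)" using P by (simp add: \<Delta>_def algebra_simps)
    then show ?thesis using \<Delta> by (simp add: \<kappa>_def field_simps)
  qed
  have norm: "(1 - \<kappa> * cj \<kappa>) * (a * cj a + b * cj b) = 0"
    using R by (simp add: c d algebra_simps)
  have "a * d - b * c = \<kappa> * (a * cj a - b * cj b)"
    by (simp add: c d algebra_simps)
  then have "a * cj a + b * cj b \<noteq> 0"
    using det by (auto simp: diff_eq_add)
  with norm have "\<kappa> * cj \<kappa> = 1"
    by simp
  then show ?thesis using that c d by blast
qed


subsection \<open>The trace code\<close>

definition trace_word :: "'a \<Rightarrow> 'a \<Rightarrow> 'a \<Rightarrow> 'a" where
  "trace_word B D u = trq q (B * u ^ 3 + D * u ^ 5)"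

definition trace_poly :: "'a \<Rightarrow> 'a \<Rightarrow> 'a \<Rightarrow> 'a" where
  "trace_poly B D u = D * u ^ 10 + B * u ^ 8 + cj B * u ^ 2 + cj D"

text \<open>On \<open>U\<close> we have \<open>u ^ (q - 2) = cj (u ^ 3)\<close> and \<open>u ^ (q - 4) = cj (u ^ 5)\<close>, so the
  coefficients of \<open>u ^ (q - 2)\<close> and \<open>u ^ (q - 4)\<close> can be moved into those of \<open>u ^ 3\<close> and \<open>u ^ 5\<close>.\<close>

lemma trace_code_on_U:
  assumes "c \<in> trace_code q (code35 q)"
  obtains B D where "\<And>u. u \<in> U \<Longrightarrow> c u = trace_word B D u"
proof -
  obtain a3 a4 a5 a6 where c: "c = (\<lambda>u. trq q (if u \<in> U then
       a3 * u ^ 3 + a4 * u ^ (q - 2) + a5 * u ^ 5 + a6 * u ^ (q - 4) else 0))"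
    using assms by (auto simp: trace_code_def code35_def U_eq)
  have "c u = trace_word (a3 + cj a4) (a5 + cj a6) u" if u: "u \<in> U" for u
  proof -
    have "u ^ (q - 2) = inverse (u ^ 3)" "u ^ (q - 4) = inverse (u ^ 5)"
      using U_power_eq_inverse[OF u, of 3] U_power_eq_inverse[OF u, of 5] q_ge_4
      by (simp_all add: numeral_eq_Suc)
    then show ?thesis
      using u by (simp add: c trace_word_def trq_eq cj_U power_inverse algebra_simps)
  qed
  then show ?thesis using that by blast
qed

lemma trace_word_in_trace_code:
  obtains c where "c \<in> trace_code q (code35 q)" "\<And>u. u \<in> U \<Longrightarrow> c u = trace_word B D u"
proof -
  let ?c = "\<lambda>u. if u \<in> Uroots q then
      B * u ^ 3 + 0 * u ^ (q - 2) + D * u ^ 5 + 0 * u ^ (q - 4) else 0"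
  have "?c \<in> code35 q" unfolding code35_def by blast
  then have "(\<lambda>u. trq q (?c u)) \<in> trace_code q (code35 q)"
    unfolding trace_code_def by (rule imageI)
  then show ?thesis
    using that by (simp add: trace_word_def U_eq)
qed

lemma trace_word_eq_poly: "u \<in> U \<Longrightarrow> u ^ 5 * trace_word B D u = trace_poly B D u"
  using U_nonzero[of u]
  by (simp add: trace_word_def trace_poly_def trq_eq cj_U power_inverse field_simps)

lemma trace_poly_moebius_expand:
  assumes "c * u + d \<noteq> 0"
  shows "(c * u + d) ^ 10 * trace_poly B D (moebius (a, b, c, d) u)
   = (D * a ^ 10 + B * a ^ 8 * c ^ 2 + cj B * a ^ 2 * c ^ 8 + cj D * c ^ 10) * u ^ 10
   + (D * a ^ 8 * b ^ 2 + B * a ^ 8 * d ^ 2 + cj B * b ^ 2 * c ^ 8 + cj D * c ^ 8 * d ^ 2) * u ^ 8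
   + (D * a ^ 2 * b ^ 8 + B * b ^ 8 * c ^ 2 + cj B * a ^ 2 * d ^ 8 + cj D * c ^ 2 * d ^ 8) * u ^ 2
   + (D * b ^ 10 + B * b ^ 8 * d ^ 2 + cj B * b ^ 2 * d ^ 8 + cj D * d ^ 10)"
proof -
  let ?X = "a * u + b" and ?Y = "c * u + d"
  have sq: "(x * u + y) ^ 2 = x ^ 2 * u ^ 2 + y ^ 2" and oct: "(x * u + y) ^ 8 = x ^ 8 * u ^ 8 + y ^ 8"
    for x y :: 'a
    using add_power_2_power[of "x * u" y 1] add_power_2_power[of "x * u" y 3]
    by (simp_all add: power_mult_distrib)
  have clear: "?Y ^ (i + j) * (?X / ?Y) ^ i = ?X ^ i * ?Y ^ j" for i j
    using assms by (simp add: power_add power_divide)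
  have "?Y ^ 10 * trace_poly B D (moebius (a, b, c, d) u)
      = D * (?Y ^ (10 + 0) * (?X / ?Y) ^ 10) + B * (?Y ^ (8 + 2) * (?X / ?Y) ^ 8)
        + cj B * (?Y ^ (2 + 8) * (?X / ?Y) ^ 2) + cj D * ?Y ^ 10"
    by (simp add: trace_poly_def algebra_simps)
  also have "\<dots> = D * (?X ^ 8 * ?X ^ 2) + B * (?X ^ 8 * ?Y ^ 2)
        + cj B * (?X ^ 2 * ?Y ^ 8) + cj D * (?Y ^ 8 * ?Y ^ 2)"
    unfolding clear by (simp flip: power_add)
  finally show ?thesis
    unfolding sq oct by (simp add: algebra_simps flip: power_add)
qed

lemma trace_poly_moebius:
  assumes \<kappa>: "\<kappa> * cj \<kappa> = 1" and r: "cj r = r * \<kappa> ^ 10"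
  obtains B' D' where "\<And>u. \<kappa> * cj b * u + \<kappa> * cj a \<noteq> 0 \<Longrightarrow>
    r * ((\<kappa> * cj b * u + \<kappa> * cj a) ^ 10 * trace_poly B D (moebius (a, b, \<kappa> * cj b, \<kappa> * cj a) u))
      = trace_poly B' D' u"
proof -
  let ?c = "\<kappa> * cj b" and ?d = "\<kappa> * cj a"
  define P5 where "P5 = D * a ^ 10 + B * a ^ 8 * ?c ^ 2 + cj B * a ^ 2 * ?c ^ 8 + cj D * ?c ^ 10"
  define P4 where "P4 = D * a ^ 8 * b ^ 2 + B * a ^ 8 * ?d ^ 2 + cj B * b ^ 2 * ?c ^ 8 + cj D * ?c ^ 8 * ?d ^ 2"
  define P1 where "P1 = D * a ^ 2 * b ^ 8 + B * b ^ 8 * ?c ^ 2 + cj B * a ^ 2 * ?d ^ 8 + cj D * ?c ^ 2 * ?d ^ 8"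
  define P0 where "P0 = D * b ^ 10 + B * b ^ 8 * ?d ^ 2 + cj B * b ^ 2 * ?d ^ 8 + cj D * ?d ^ 10"
  have "P0 = \<kappa> ^ 10 * cj P5" "P1 = \<kappa> ^ 10 * cj P4"
    unfolding P0_def P5_def P1_def P4_def using \<kappa> by (simp_all add: power_mult_distrib) algebra+
  then have poly_eq: "r * (P5 * u ^ 10 + P4 * u ^ 8 + P1 * u ^ 2 + P0) = trace_poly (r * P4) (r * P5) u"
    for u
    by (simp add: trace_poly_def r algebra_simps)
  have "r * ((?c * u + ?d) ^ 10 * trace_poly B D (moebius (a, b, ?c, ?d) u))
      = trace_poly (r * P4) (r * P5) u" if "?c * u + ?d \<noteq> 0" for u
    using trace_poly_moebius_expand[OF that, where B = B and D = D and a = a and b = b] poly_eq[of u]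
    unfolding P0_def P1_def P4_def P5_def by simp
  then show ?thesis by (rule that)
qed

lemma trace_word_moebius_zero_iff:
  assumes M: "M \<in> stab U"
  obtains B' D' where "\<And>u. u \<in> U \<Longrightarrow>
    trace_word B' D' u = 0 \<longleftrightarrow> trace_word B D (moebius M u) = 0"
proof -
  obtain a b c d where M_eq: "M = (a, b, c, d)" by (cases M)
  obtain \<kappa> where \<kappa>: "\<kappa> * cj \<kappa> = 1" and c: "c = \<kappa> * cj b" and d: "d = \<kappa> * cj a"
    using stab_conj_form M unfolding M_eq by blast
  have "\<kappa> ^ 10 * cj (\<kappa> ^ 10) = 1" using \<kappa> by (simp flip: power_mult_distrib)
  then obtain r where r0: "r \<noteq> 0" and r: "cj r = r * \<kappa> ^ 10" by (rule hilbert90)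
  obtain B' D' where BD': "\<And>u. c * u + d \<noteq> 0 \<Longrightarrow>
      r * ((c * u + d) ^ 10 * trace_poly B D (moebius M u)) = trace_poly B' D' u"
    using trace_poly_moebius[OF \<kappa> r] unfolding M_eq c d by blast
  have "trace_word B' D' u = 0 \<longleftrightarrow> trace_word B D (moebius M u) = 0" if u: "u \<in> U" for u
  proof -
    have w: "moebius M u \<in> U" and Y: "c * u + d \<noteq> 0"
      using stab_moebius_mem[OF M u] stab_moebius_den[OF M u] by (simp_all add: M_eq)
    have "u ^ 5 * trace_word B' D' u
        = r * ((c * u + d) ^ 10 * (moebius M u ^ 5 * trace_word B D (moebius M u)))"
      using BD'[OF Y] by (simp add: trace_word_eq_poly u w)
    then show ?thesis
      using r0 Y U_nonzero[OF u] U_nonzero[OF w] by auto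
  qed
  then show ?thesis using that by blast
qed


lemma supp_on_moebius_image:
  assumes M: "M \<in> stab U" and c0: "c0 \<in> trace_code q (code35 q)"
  obtains c' where "c' \<in> trace_code q (code35 q)" "supp_on U c' = moebius M ` supp_on U c0"
proof -
  let ?N = "mat2_adj M"
  have N: "?N \<in> stab U" by (rule stab_adj[OF _ M]) simp
  obtain B D where c0_eq: "\<And>u. u \<in> U \<Longrightarrow> c0 u = trace_word B D u"
    using trace_code_on_U[OF c0] by blast
  obtain B' D' where zero: "\<And>v. v \<in> U \<Longrightarrow>
      trace_word B' D' v = 0 \<longleftrightarrow> trace_word B D (moebius ?N v) = 0"
    using trace_word_moebius_zero_iff[OF N] by blast
  obtain c' where c': "c' \<in> trace_code q (code35 q)" and c'_eq: "\<And>v. v \<in> U \<Longrightarrow> c' v = trace_word B' D' v"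
    by (rule trace_word_in_trace_code[of B' D']) blast
  have NM: "moebius ?N (moebius M u) = u" if "u \<in> U" for u
    by (rule stab_moebius_adj[OF M that])
  have MN: "moebius M (moebius ?N v) = v" if "v \<in> U" for v
    using stab_moebius_adj[OF N that] by simp
  have "supp_on U c' = {v \<in> U. c0 (moebius ?N v) \<noteq> 0}"
    using zero c'_eq c0_eq stab_moebius_mem[OF N] by (auto simp: supp_on_def)
  also have "\<dots> = moebius M ` supp_on U c0"
  proof
    show "{v \<in> U. c0 (moebius ?N v) \<noteq> 0} \<subseteq> moebius M ` supp_on U c0"
      using MN stab_moebius_mem[OF N] by (force simp: supp_on_def)
    show "moebius M ` supp_on U c0 \<subseteq> {v \<in> U. c0 (moebius ?N v) \<noteq> 0}"
      using NM stab_moebius_mem[OF M] by (auto simp: supp_on_def)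
  qed
  finally show ?thesis using that c' by blast
qed

lemma moebius_block:
  assumes B: "B \<in> blocks_k U k (trace_code q (code35 q))" and M: "M \<in> stab U"
  shows "moebius M ` B \<in> blocks_k U k (trace_code q (code35 q))"
proof -
  obtain c0 where c0: "c0 \<in> trace_code q (code35 q)" "B = supp_on U c0" "card B = k"
    using B by (auto simp: blocks_k_def)
  obtain c' where c': "c' \<in> trace_code q (code35 q)" "supp_on U c' = moebius M ` B"
    using supp_on_moebius_image[OF M c0(1)] c0(2) by blast
  have "card (moebius M ` B) = k"
    using card_image[OF inj_on_subset[OF stab_moebius_inj_on[OF M]]] c0(2,3)
    by (simp add: supp_on_def)
  then show ?thesis
    unfolding blocks_k_def by (intro CollectI exI[of _ c']) (simp add: c')
qed

lemma mob_block:
  assumes B: "B \<in> blocks_k U k (trace_code q (code35 q))" and M: "M \<in> stab U"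
  shows "mob M ` Some ` B \<in> (\<lambda>X. Some ` X) ` blocks_k U k (trace_code q (code35 q))"
proof -
  have "B \<subseteq> U" using B by (auto simp: blocks_k_def supp_on_def)
  then have "mob M ` Some ` B = Some ` moebius M ` B"
    using stab_mob_Some[OF M] by (force simp: image_image)
  then show ?thesis using moebius_block[OF B M] by blast
qed


subsection \<open>Three-transitivity\<close>

lemma cj_diff_U: "x \<in> U \<Longrightarrow> y \<in> U \<Longrightarrow> cj (x - y) = (y - x) / (x * y)"
  using U_nonzero[of x] U_nonzero[of y] by (simp add: cj_U field_simps)

lemma cj_cross_ratio:
  assumes u: "u \<in> U" "u1 \<in> U" "u2 \<in> U" "u3 \<in> U"
  shows "cj (moebius (cross_ratio_mat u1 u2 u3) u) = moebius (cross_ratio_mat u1 u2 u3) u"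
proof -
  have P: "u * u1 * u2 * u3 \<noteq> 0" using U_nonzero u by simp
  have "cj ((u2 - u3) * (u - u1)) = (u2 - u3) * (u - u1) / (u * u1 * u2 * u3)"
    "cj ((u2 - u1) * (u - u3)) = (u2 - u1) * (u - u3) / (u * u1 * u2 * u3)"
    using P by (simp_all only: cj_mult cj_diff_U u) (simp_all add: field_simps)
  then show ?thesis
    using P by (simp del: cj_mult cj_diff add: moebius_cross_ratio_mat)
qed

lemma moebius_adj_cross_ratio_mat_mem:
  assumes v: "v1 \<in> U" "v2 \<in> U" "v3 \<in> U" "v1 \<noteq> v3" "v2 \<noteq> v3" and w: "cj w = w"
  shows "moebius_den (mat2_adj (cross_ratio_mat v1 v2 v3)) w \<noteq> 0"
    and "moebius (mat2_adj (cross_ratio_mat v1 v2 v3)) w \<in> U"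
proof -
  define N where "N = - (v3 * (v2 - v1)) * w + v1 * (v2 - v3)"
  define Y where "Y = - (v2 - v1) * w + (v2 - v3)"
  have P: "v1 * v2 * v3 \<noteq> 0" using U_nonzero v by simp
  have adj: "moebius_den (mat2_adj (cross_ratio_mat v1 v2 v3)) w = Y"
    "moebius (mat2_adj (cross_ratio_mat v1 v2 v3)) w = N / Y"
    by (simp_all add: cross_ratio_mat_def N_def Y_def)
  have "cj N = - Y / (v1 * v2 * v3)" "cj Y = - N / (v1 * v2 * v3)"
    using P v unfolding N_def Y_def
    by (simp_all only: cj_add cj_mult cj_minus cj_diff_U w cj_U) (simp_all add: field_simps)
  moreover have Y0: "Y \<noteq> 0"
  proof
    assume "Y = 0"
    moreover from this have "N = 0" using \<open>cj Y = - N / (v1 * v2 * v3)\<close> P by simp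
    ultimately have "(v1 - v3) * (v2 - v3) = 0" unfolding N_def Y_def by algebra
    then show False using v(4,5) by simp
  qed
  ultimately have "N \<noteq> 0" using P by auto
  then show "moebius_den (mat2_adj (cross_ratio_mat v1 v2 v3)) w \<noteq> 0"
    and "moebius (mat2_adj (cross_ratio_mat v1 v2 v3)) w \<in> U"
    using Y0 P \<open>cj N = _\<close> \<open>cj Y = _\<close> by (simp_all add: adj mem_U_iff)
qed

text \<open>The map is the composite of the cross-ratio map of \<open>u1, u2, u3\<close>, which sends
  \<open>U - {u3}\<close> into the fixed field of \<open>cj\<close>, with the inverse of the cross-ratio map of
  \<open>v1, v2, v3\<close>; the pole \<open>u3\<close> is treated separately.\<close>

lemma stab_3_transitive:
  assumes u: "u1 \<in> U" "u2 \<in> U" "u3 \<in> U" "u1 \<noteq> u2" "u1 \<noteq> u3" "u2 \<noteq> u3"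
    and v: "v1 \<in> U" "v2 \<in> U" "v3 \<in> U" "v1 \<noteq> v2" "v1 \<noteq> v3" "v2 \<noteq> v3"
  obtains M where "M \<in> stab U" "moebius M u1 = v1" "moebius M u2 = v2" "moebius M u3 = v3"
proof -
  let ?N1 = "cross_ratio_mat u1 u2 u3" and ?N2 = "mat2_adj (cross_ratio_mat v1 v2 v3)"
  let ?M = "mat2_mult ?N2 ?N1"
  have det1: "det2 ?N1 \<noteq> 0" and det2: "det2 (cross_ratio_mat v1 v2 v3) \<noteq> 0"
    using u v by (simp_all add: det2_cross_ratio_mat)
  have generic: "moebius_den ?M u \<noteq> 0 \<and> moebius ?M u = moebius ?N2 (moebius ?N1 u)"
    if "u \<in> U" "u \<noteq> u3" for u
  proof -
    have "moebius_den ?N1 u \<noteq> 0" using u that by (simp add: moebius_den_cross_ratio_mat)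
    moreover have "moebius_den ?N2 (moebius ?N1 u) \<noteq> 0"
      using moebius_adj_cross_ratio_mat_mem(1)[OF v(1-3,5,6) cj_cross_ratio] u that by blast
    ultimately show ?thesis using moebius_mat2_mult by blast
  qed
  have pole: "moebius_den ?M u3 \<noteq> 0 \<and> moebius ?M u3 = v3"
  proof -
    have N2: "?N2 = (- (v3 * (v2 - v1)), - (- (v1 * (v2 - v3))), - (v2 - v1), v2 - v3)"
      by (simp add: cross_ratio_mat_def)
    have pole_u3: "moebius_den ?N1 u3 = 0" by (simp add: moebius_den_cross_ratio_mat)
    have "- (v2 - v1) \<noteq> 0" using v(4) by simp
    note at_pole = moebius_mat2_mult_pole[OF pole_u3 det1 N2 this]
    moreover have "- (v3 * (v2 - v1)) / - (v2 - v1) = v3"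
      using v(4) by (simp only: minus_divide_divide) simp
    ultimately show ?thesis
      using at_pole by simp
  qed
  have at_v: "moebius ?N2 (moebius (cross_ratio_mat v1 v2 v3) x) = x" if "x \<in> {v1, v2}" for x
    using that v by (intro moebius_mat2_adj(2)[OF det2]) (auto simp: moebius_den_cross_ratio_mat)
  have "?M \<in> stab U"
  proof (rule stabI)
    show "det2 ?M \<noteq> 0" using det1 det2 by (simp add: det2_mat2_mult)
    fix u assume "u \<in> U"
    then show "moebius_den ?M u \<noteq> 0 \<and> moebius ?M u \<in> U"
      using generic pole v(3) moebius_adj_cross_ratio_mat_mem(2)[OF v(1-3,5,6) cj_cross_ratio] u
      by (cases "u = u3") auto
  qed simp
  moreover have "moebius ?M u1 = v1" "moebius ?M u2 = v2"
    using generic[of u1] generic[of u2] at_v[of v1] at_v[of v2] u v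
    by (simp_all add: moebius_cross_ratio_mat)
  ultimately show ?thesis using that pole by blast
qed

lemma stab_3_transitive_subsets:
  assumes "T1 \<subseteq> U" "card T1 = 3" "T2 \<subseteq> U" "card T2 = 3"
  obtains M where "M \<in> stab U" "moebius M ` T1 = T2"
proof -
  obtain u1 u2 u3 where T1: "T1 = {u1, u2, u3}" "u1 \<noteq> u2" "u1 \<noteq> u3" "u2 \<noteq> u3"
    using assms(2) by (auto simp: card_3_iff)
  obtain v1 v2 v3 where T2: "T2 = {v1, v2, v3}" "v1 \<noteq> v2" "v1 \<noteq> v3" "v2 \<noteq> v3"
    using assms(4) by (auto simp: card_3_iff)
  obtain M where "M \<in> stab U" "moebius M u1 = v1" "moebius M u2 = v2" "moebius M u3 = v3"
    by (rule stab_3_transitive[of u1 u2 u3 v1 v2 v3]) (use assms T1 T2 in auto)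
  then show ?thesis using that T1 T2 by auto
qed

lemma blocks_is_3_design:
  assumes "3 < k" and "\<exists>c \<in> trace_code q (code35 q). card (supp_on U c) = k"
  shows "is_t_design 3 U (blocks_k U k (trace_code q (code35 q)))"
proof -
  let ?Bs = "blocks_k U k (trace_code q (code35 q))"
  obtain c where c: "c \<in> trace_code q (code35 q)" "card (supp_on U c) = k"
    using assms(2) by blast
  show ?thesis
  proof (rule is_t_designI_transitive)
    show "supp_on U c \<in> ?Bs" "3 \<le> card (supp_on U c)"
      using c assms(1) by (auto simp: blocks_k_def)
    show "\<forall>B\<in>?Bs. B \<subseteq> U"
      by (auto simp: blocks_k_def supp_on_def)
    fix T1 T2 assume "T1 \<subseteq> U" "card T1 = 3" "T2 \<subseteq> U" "card T2 = 3"
    then obtain M where "M \<in> stab U" "moebius M ` T1 = T2"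
      by (rule stab_3_transitive_subsets)
    then show "\<exists>g. inj_on g U \<and> g ` T1 = T2 \<and> (\<forall>B\<in>?Bs. g ` B \<in> ?Bs)"
      using stab_moebius_inj_on moebius_block by blast
  qed simp
qed

end


theorem theorem23:
  fixes m q k :: nat
  assumes "m \<ge> 2" and "q = 2 ^ m"
    and "card (UNIV :: 'a::{field,finite} set) = q ^ 2"
    and "1 \<le> k" and "k \<le> q + 1"
    and "\<exists>c \<in> trace_code q (code35 q). card (supp_on (Uroots q :: 'a set) c) = k"
  shows "(\<forall>B \<in> blocks_k (Uroots q :: 'a set) k (trace_code q (code35 q)).
            \<forall>M \<in> stab (Uroots q :: 'a set).
              mob M ` (Some ` B) \<in> (\<lambda>X. Some ` X) ` blocks_k (Uroots q :: 'a set) k (trace_code q (code35 q)))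
      \<and> (k > 3 \<longrightarrow> is_t_design 3 (Uroots q :: 'a set) (blocks_k (Uroots q) k (trace_code q (code35 q))))"
proof -
  interpret gf_q2 q m "Uroots q :: 'a set"
    by unfold_locales (use assms in auto)
  show ?thesis
    using mob_block blocks_is_3_design assms(6) by blast
qed

end
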